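(* Let $G$ be a finite abelian group, $k\ge1$, $\Gamma=G\wr\mathbb{Z}^k=\Sigma\rtimes_\alpha\mathbb{Z}^k$, and let $\varphi:\Gamma\to\Gamma$ be an automorphism. Let $\varphi'=\varphi|_\Sigma:\Sigma\to\Sigma$ and let $\overline{\varphi}:\mathbb{Z}^k\to\mathbb{Z}^k$ be the automorphism induced by $\varphi$ on $\Gamma/\Sigma\cong\mathbb{Z}^k$. Then $R(\varphi)<\infty$ if and only if $R(\overline{\varphi})<\infty$ and $R(\tau_m\circ\varphi')<\infty$ for every $m\in\mathbb{Z}^k$. Moreover, in the "if" direction it suffices to require $R(\tau_m\circ\varphi')<\infty$ only for $m$ running over a set of representatives of the Reidemeister classes of $\overline{\varphi}$ (together with $R(\overline{\varphi})<\infty$).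
   Context: Reidemeister number: for an endomorphism $\psi$ of a group $\Gamma$, $x,y$ are $\psi$-conjugate if $y=gx\psi(g^{-1})$ for some $g\in\Gamma$; $R(\psi)$ is the number of such classes (possibly $\infty$). $G\wr\mathbb{Z}^k=\Sigma\rtimes_\alpha\mathbb{Z}^k$ with $\Sigma=\bigoplus_{x\in\mathbb{Z}^k}G_x$, $G_x\cong G$, $g_x$ denoting $g\in G$ placed in $G_x$, and $\alpha(x)(g_y)=g_{x+y}$. $\Sigma$ is the set of torsion elements of $\Gamma$, hence invariant under every automorphism. For $m\in\mathbb{Z}^k\subset\Gamma$, $\tau_m:\Sigma\to\Sigma$ denotes conjugation $h\mapsto mhm^{-1}$ restricted to $\Sigma$, i.e. $\tau_m=\alpha(m)$. *)

theory Defs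
  imports "HOL-Algebra.Algebra" "HOL-Library.Extended_Nat" "HOL-Library.Function_Algebras"
begin

definition twisted_conj :: "('g, 'b) monoid_scheme \<Rightarrow> ('g \<Rightarrow> 'g) \<Rightarrow> ('g \<times> 'g) set" where
  "twisted_conj H \<psi> = {(x, y). x \<in> carrier H \<and> y \<in> carrier H \<and>
      (\<exists>g \<in> carrier H. y = g \<otimes>\<^bsub>H\<^esub> x \<otimes>\<^bsub>H\<^esub> \<psi> (inv\<^bsub>H\<^esub> g))}"

definition reidemeister_classes :: "('g, 'b) monoid_scheme \<Rightarrow> ('g \<Rightarrow> 'g) \<Rightarrow> 'g set set" where
  "reidemeister_classes H \<psi> = carrier H // twisted_conj H \<psi>"

definition reidemeister_number :: "('g, 'b) monoid_scheme \<Rightarrow> ('g \<Rightarrow> 'g) \<Rightarrow> enat" where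
  "reidemeister_number H \<psi> =
     (if finite (reidemeister_classes H \<psi>) then enat (card (reidemeister_classes H \<psi>)) else \<infinity>)"

definition zvec :: "nat \<Rightarrow> (nat \<Rightarrow> int) set" where
  "zvec k = {v. \<forall>i\<ge>k. v i = 0}"

definition zgrp :: "nat \<Rightarrow> (nat \<Rightarrow> int) monoid" where
  "zgrp k = \<lparr>carrier = zvec k, monoid.mult = (+), one = 0\<rparr>"

text \<open>Sigma = direct sum of copies of G indexed by Z^k: finitely supported functions
  Z^k -> G (canonically equal to the identity outside Z^k).\<close>

definition fsupp :: "('a, 'b) monoid_scheme \<Rightarrow> nat \<Rightarrow> ((nat \<Rightarrow> int) \<Rightarrow> 'a) set" where
  "fsupp G k = {s. (\<forall>x. s x \<in> carrier G) \<and> (\<forall>x. x \<notin> zvec k \<longrightarrow> s x = \<one>\<^bsub>G\<^esub>)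
                    \<and> finite {x. s x \<noteq> \<one>\<^bsub>G\<^esub>}}"

text \<open>alpha(m)(t)(x) = t(x - m), so alpha(m)(g_y) = g_(m+y).
  Multiplication of the semidirect product Sigma x|_alpha Z^k:
  (s,m)(t,n) = (s * alpha(m)(t), m + n).\<close>

definition wreath :: "('a, 'b) monoid_scheme \<Rightarrow> nat \<Rightarrow> (((nat \<Rightarrow> int) \<Rightarrow> 'a) \<times> (nat \<Rightarrow> int)) monoid" where
  "wreath G k = \<lparr>carrier = fsupp G k \<times> zvec k,
      monoid.mult = (\<lambda>(s, m) (t, n). (\<lambda>x. s x \<otimes>\<^bsub>G\<^esub> t (x - m), m + n)),
      one = (\<lambda>_. \<one>\<^bsub>G\<^esub>, 0)\<rparr>"

definition sigma_grp :: "('a, 'b) monoid_scheme \<Rightarrow> nat \<Rightarrow> (((nat \<Rightarrow> int) \<Rightarrow> 'a) \<times> (nat \<Rightarrow> int)) monoid" where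
  "sigma_grp G k = (wreath G k)\<lparr>carrier := {h \<in> carrier (wreath G k). snd h = 0}\<rparr>"

definition zelt :: "('a, 'b) monoid_scheme \<Rightarrow> (nat \<Rightarrow> int) \<Rightarrow> ((nat \<Rightarrow> int) \<Rightarrow> 'a) \<times> (nat \<Rightarrow> int)" where
  "zelt G m = (\<lambda>_. \<one>\<^bsub>G\<^esub>, m)"

definition tau :: "('a, 'b) monoid_scheme \<Rightarrow> nat \<Rightarrow> (nat \<Rightarrow> int)
    \<Rightarrow> ((nat \<Rightarrow> int) \<Rightarrow> 'a) \<times> (nat \<Rightarrow> int) \<Rightarrow> ((nat \<Rightarrow> int) \<Rightarrow> 'a) \<times> (nat \<Rightarrow> int)" where
  "tau G k m h = zelt G m \<otimes>\<^bsub>wreath G k\<^esub> h \<otimes>\<^bsub>wreath G k\<^esub> inv\<^bsub>wreath G k\<^esub> (zelt G m)"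

text \<open>The automorphism of Gamma/Sigma = Z^k induced by phi: the class of (s,m) is m.\<close>

definition induced_bar :: "('a, 'b) monoid_scheme
    \<Rightarrow> (((nat \<Rightarrow> int) \<Rightarrow> 'a) \<times> (nat \<Rightarrow> int) \<Rightarrow> ((nat \<Rightarrow> int) \<Rightarrow> 'a) \<times> (nat \<Rightarrow> int))
    \<Rightarrow> (nat \<Rightarrow> int) \<Rightarrow> (nat \<Rightarrow> int)" where
  "induced_bar G \<phi> m = snd (\<phi> (zelt G m))"

end

theory Submission
  imports Defs "Jordan_Normal_Form.Determinant"
begin

text \<open>Finiteness of a Reidemeister number means that finitely many twisted conjugacy classes cover
  the group. Since \<Sigma> is the torsion subgroup, \<phi> preserves it and the projection to Z^k
  intertwines \<phi> with phibar; so a finite cover of \<Gamma> projects to one of Z^k. If R(phibar) is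
  finite, the image of id - phibar has finite index, so id - phibar is invertible over \<rat> and phibar
  has no nonzero fixed point. Consequently two elements of a coset \<Sigma>m that are \<phi>-conjugate are
  conjugated by an element of \<Sigma>, and moving the coset \<Sigma>m to \<Sigma> turns \<phi> into
  tau_m \<circ> \<phi>: covers of \<Gamma> yield covers of \<Sigma> for every tau_m \<circ> \<phi>. Conversely, conjugating
  by an element of Z^k moves any element into a coset \<Sigma>m with m one of the representatives of
  the classes of phibar, and the translated covers of \<Sigma> for tau_m \<circ> \<phi> then cover \<Gamma>.\<close>

lemma (in group) twisted_conj_equiv:
  assumes "\<psi> \<in> hom G G"
  shows "equiv (carrier G) (twisted_conj G \<psi>)"
proof -
  interpret group_hom G G \<psi> using assms by (simp add: group_hom_def group_hom_axioms_def is_group)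
  show ?thesis
  proof (rule equivI)
    show "twisted_conj G \<psi> \<subseteq> carrier G \<times> carrier G" by (auto simp: twisted_conj_def)
    show "refl_on (carrier G) (twisted_conj G \<psi>)"
    proof (rule refl_onI)
      fix x assume x: "x \<in> carrier G"
      then have "x = \<one> \<otimes> x \<otimes> \<psi> (inv \<one>)" by simp
      then show "(x, x) \<in> twisted_conj G \<psi>" using x unfolding twisted_conj_def by blast
    qed
    show "sym (twisted_conj G \<psi>)"
    proof (rule symI)
      fix x y assume "(x, y) \<in> twisted_conj G \<psi>"
      then obtain g where x: "x \<in> carrier G" and y: "y \<in> carrier G" and g: "g \<in> carrier G"
        and y_eq: "y = g \<otimes> x \<otimes> \<psi> (inv g)" unfolding twisted_conj_def by blast
      have "inv g \<otimes> y \<otimes> \<psi> (inv (inv g)) = inv g \<otimes> g \<otimes> x \<otimes> (\<psi> (inv g) \<otimes> \<psi> g)"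
        using x g by (simp add: y_eq m_assoc) (simp add: m_assoc[symmetric])
      also have "\<psi> (inv g) \<otimes> \<psi> g = \<one>" using g by (simp flip: hom_mult)
      finally have "x = inv g \<otimes> y \<otimes> \<psi> (inv (inv g))" using x g by simp
      then show "(y, x) \<in> twisted_conj G \<psi>" using x y g unfolding twisted_conj_def by blast
    qed
    show "trans (twisted_conj G \<psi>)"
    proof (rule transI)
      fix x y z assume "(x, y) \<in> twisted_conj G \<psi>" "(y, z) \<in> twisted_conj G \<psi>"
      then obtain g h where x: "x \<in> carrier G" and z: "z \<in> carrier G"
        and g: "g \<in> carrier G" and h: "h \<in> carrier G"
        and y_eq: "y = g \<otimes> x \<otimes> \<psi> (inv g)" and z_eq: "z = h \<otimes> y \<otimes> \<psi> (inv h)"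
        unfolding twisted_conj_def by blast
      have "z = (h \<otimes> g) \<otimes> x \<otimes> (\<psi> (inv g) \<otimes> \<psi> (inv h))"
        using x g h by (simp add: y_eq z_eq m_assoc)
      also have "\<psi> (inv g) \<otimes> \<psi> (inv h) = \<psi> (inv (h \<otimes> g))"
        using g h by (simp add: inv_mult_group hom_mult)
      finally show "(x, z) \<in> twisted_conj G \<psi>" using x z g h unfolding twisted_conj_def by blast
    qed
  qed
qed

lemma finite_quotient_iff_finite_cover:
  assumes r: "equiv A r"
  shows "finite (A // r) \<longleftrightarrow> (\<exists>F \<subseteq> A. finite F \<and> A \<subseteq> r `` F)"
proof
  assume fin: "finite (A // r)"
  define F where "F = (\<lambda>C. SOME x. x \<in> C) ` (A // r)"
  have rep: "(SOME x. x \<in> C) \<in> C" if "C \<in> A // r" for C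
    using in_quotient_imp_non_empty[OF r that] by (simp add: some_in_eq)
  have "F \<subseteq> A" using rep in_quotient_imp_subset[OF r] by (force simp: F_def)
  moreover have "A \<subseteq> r `` F"
  proof
    fix a assume "a \<in> A"
    then have C: "r `` {a} \<in> A // r" by (rule quotientI)
    then have "(a, SOME x. x \<in> r `` {a}) \<in> r" using rep by blast
    then have "(SOME x. x \<in> r `` {a}, a) \<in> r" using r by (meson equivE symD)
    moreover have "(SOME x. x \<in> r `` {a}) \<in> F" using C unfolding F_def by (rule imageI)
    ultimately show "a \<in> r `` F" by blast
  qed
  ultimately show "\<exists>F \<subseteq> A. finite F \<and> A \<subseteq> r `` F" using fin F_def by blast
next
  assume "\<exists>F \<subseteq> A. finite F \<and> A \<subseteq> r `` F"
  then obtain F where F: "finite F" "A \<subseteq> r `` F" by blast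
  have "A // r \<subseteq> (\<lambda>f. r `` {f}) ` F"
  proof
    fix C assume "C \<in> A // r"
    then obtain a where a: "a \<in> A" "C = r `` {a}" by (auto elim: quotientE)
    then obtain f where f: "f \<in> F" "(f, a) \<in> r" using F by blast
    then have "r `` {f} = r `` {a}" using r by (simp add: equiv_class_eq)
    then show "C \<in> (\<lambda>f. r `` {f}) ` F" using a f by blast
  qed
  then show "finite (A // r)" using F by (meson finite_surj)
qed

lemma representatives_finite_cover:
  assumes r: "equiv A r" and fin: "finite (A // r)" and "M \<subseteq> A"
    and rep: "\<forall>C \<in> A // r. \<exists>!m. m \<in> M \<and> m \<in> C"
  shows "finite M" and "A \<subseteq> r `` M"
proof -
  have cls: "r `` {m} \<in> A // r" "m \<in> r `` {m}" if "m \<in> A" for m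
    using that equiv_class_self[OF r that] by (simp_all add: quotientI)
  have "inj_on (\<lambda>m. r `` {m}) M"
  proof (rule inj_onI)
    fix a b assume ab: "a \<in> M" "b \<in> M" "r `` {a} = r `` {b}"
    then have "a \<in> r `` {a}" "b \<in> r `` {a}" "r `` {a} \<in> A // r" using cls \<open>M \<subseteq> A\<close> by auto
    then show "a = b" using rep ab(1,2) by (metis (no_types, lifting))
  qed
  moreover have "(\<lambda>m. r `` {m}) ` M \<subseteq> A // r" using cls \<open>M \<subseteq> A\<close> by auto
  ultimately show "finite M" using fin by (meson finite_imageD finite_subset)
  show "A \<subseteq> r `` M"
  proof
    fix a assume "a \<in> A"
    then have "r `` {a} \<in> A // r" by (rule cls)
    then obtain m where "m \<in> M" "m \<in> r `` {a}" using rep by blast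
    then have "(m, a) \<in> r" using r by (meson Image_singleton_iff equivE symD)
    then show "a \<in> r `` M" using \<open>m \<in> M\<close> by blast
  qed
qed

definition twisted_cover :: "('g, 'b) monoid_scheme \<Rightarrow> ('g \<Rightarrow> 'g) \<Rightarrow> 'g set \<Rightarrow> bool" where
  "twisted_cover H \<psi> F \<longleftrightarrow> F \<subseteq> carrier H \<and> finite F \<and> carrier H \<subseteq> twisted_conj H \<psi> `` F"

lemma reidemeister_number_finite_iff:
  assumes "group H" "\<psi> \<in> hom H H"
  shows "reidemeister_number H \<psi> < \<infinity> \<longleftrightarrow> (\<exists>F. twisted_cover H \<psi> F)"
  using finite_quotient_iff_finite_cover[OF group.twisted_conj_equiv[OF assms]]
  by (auto simp: reidemeister_number_def reidemeister_classes_def twisted_cover_def)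

lemma zvec_add [simp]: "m \<in> zvec k \<Longrightarrow> n \<in> zvec k \<Longrightarrow> m + n \<in> zvec k"
  by (simp add: zvec_def)

lemma zvec_diff [simp]: "m \<in> zvec k \<Longrightarrow> n \<in> zvec k \<Longrightarrow> m - n \<in> zvec k"
  by (simp add: zvec_def)

lemma zvec_uminus [simp]: "m \<in> zvec k \<Longrightarrow> - m \<in> zvec k"
  by (simp add: zvec_def)

lemma zvec_zero [simp]: "0 \<in> zvec k"
  by (simp add: zvec_def)

lemma zvec_scale [simp]: "m \<in> zvec k \<Longrightarrow> (\<lambda>i. c * m i) \<in> zvec k"
  by (simp add: zvec_def)

lemma zgrp_carrier [simp]: "carrier (zgrp k) = zvec k"
  by (simp add: zgrp_def)

lemma zgrp_mult [simp]: "a \<otimes>\<^bsub>zgrp k\<^esub> b = a + b"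
  by (simp add: zgrp_def)

lemma zgrp_one [simp]: "\<one>\<^bsub>zgrp k\<^esub> = 0"
  by (simp add: zgrp_def)

lemma zgrp_group: "group (zgrp k)"
  by (rule groupI) (auto simp: add.assoc intro!: bexI[of _ "- _"])

lemma zgrp_inv [simp]: "m \<in> zvec k \<Longrightarrow> inv\<^bsub>zgrp k\<^esub> m = - m"
  by (rule group.inv_equality[OF zgrp_group]) auto

lemma zgrp_int_pow:
  assumes "m \<in> zvec k"
  shows "m [^]\<^bsub>zgrp k\<^esub> (c::int) = (\<lambda>i. c * m i)"
proof -
  have nat_pow: "m [^]\<^bsub>zgrp k\<^esub> (n::nat) = (\<lambda>i. int n * m i)" for n
    by (induction n) (auto simp: fun_eq_iff algebra_simps)
  show ?thesis
  proof (cases "c \<ge> 0")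
    case True
    then show ?thesis by (simp add: int_pow_def2 nat_pow)
  next
    case False
    then show ?thesis
      using zgrp_inv[OF zvec_scale[OF assms, of "int (nat (- c))"]] by (simp add: int_pow_def2 nat_pow fun_eq_iff)
  qed
qed

definition zunit :: "nat \<Rightarrow> nat \<Rightarrow> int" where
  "zunit i = (\<lambda>j. if j = i then 1 else 0)"

lemma zunit_zvec [simp]: "i < k \<Longrightarrow> zunit i \<in> zvec k"
  by (simp add: zunit_def zvec_def)

lemma zgrp_hom_scale:
  assumes "\<chi> \<in> hom (zgrp k) (zgrp k)" and "m \<in> zvec k"
  shows "\<chi> (\<lambda>i. c * m i) = (\<lambda>i. c * \<chi> m i)"
proof -
  have "\<chi> m \<in> zvec k" using hom_in_carrier[of \<chi> "zgrp k" "zgrp k" m] assms by simp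
  then show ?thesis
    using hom_int_pow[OF assms(1) _ zgrp_group zgrp_group, of m c] assms(2) by (simp add: zgrp_int_pow)
qed

lemma zgrp_hom_expansion:
  assumes \<chi>: "\<chi> \<in> hom (zgrp k) (zgrp k)" and v: "v \<in> zvec k"
  shows "\<chi> v i = (\<Sum>j<k. v j * \<chi> (zunit j) i)"
proof -
  interpret group_hom "zgrp k" "zgrp k" \<chi>
    using \<chi> zgrp_group by (simp add: group_hom_def group_hom_axioms_def)
  define trunc where "trunc n = (\<lambda>i. if i < n then v i else 0)" for n
  have "\<chi> (trunc n) = (\<lambda>i. \<Sum>j<n. v j * \<chi> (zunit j) i)" if "n \<le> k" for n
    using that
  proof (induction n)
    case 0
    have "trunc 0 = 0" by (simp add: trunc_def fun_eq_iff)
    then show ?case using hom_one by (simp add: zero_fun_def)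
  next
    case (Suc n)
    have "trunc (Suc n) = trunc n + (\<lambda>i. v n * zunit n i)"
      by (auto simp: trunc_def zunit_def fun_eq_iff less_Suc_eq)
    moreover have "trunc n \<in> zvec k" using Suc.prems by (simp add: trunc_def zvec_def)
    ultimately have "\<chi> (trunc (Suc n)) = \<chi> (trunc n) + (\<lambda>i. v n * \<chi> (zunit n) i)"
      using Suc.prems hom_mult[of "trunc n" "\<lambda>i. v n * zunit n i"] zgrp_hom_scale[OF \<chi>, of "zunit n" "v n"]
      by simp
    then show ?case using Suc by (simp add: fun_eq_iff)
  qed
  moreover have "trunc k = v" using v by (auto simp: trunc_def zvec_def fun_eq_iff)
  ultimately show ?thesis by (metis order.refl)
qed

lemma zgrp_hom_inj_if_hits_multiples:
  assumes \<chi>: "\<chi> \<in> hom (zgrp k) (zgrp k)"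
    and hits: "\<And>i. i < k \<Longrightarrow> \<exists>c w. c \<noteq> 0 \<and> w \<in> zvec k \<and> \<chi> w = (\<lambda>j. c * zunit i j)"
    and z: "z \<in> zvec k" and \<chi>z: "\<chi> z = 0"
  shows "z = 0"
proof -
  obtain c w where cw: "\<And>i. i < k \<Longrightarrow> c i \<noteq> 0 \<and> w i \<in> zvec k \<and> \<chi> (w i) = (\<lambda>j. c i * zunit i j)"
    using hits by metis
  \<comment> \<open>Over \<rat>, the matrix of \<chi> has the right inverse e_j \<mapsto> w_j / c_j.\<close>
  define A :: "rat mat" where "A = mat k k (\<lambda>(i, j). of_int (\<chi> (zunit j) i))"
  define B :: "rat mat" where "B = mat k k (\<lambda>(i, j). of_int (w j i) / of_int (c j))"
  have A: "A \<in> carrier_mat k k" and B: "B \<in> carrier_mat k k" by (simp_all add: A_def B_def)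
  have "A * B = 1\<^sub>m k"
  proof (rule eq_matI)
    fix i j assume "i < dim_row (1\<^sub>m k :: rat mat)" "j < dim_col (1\<^sub>m k :: rat mat)"
    then have ij: "i < k" "j < k" by auto
    have "(A * B) $$ (i, j) = (\<Sum>l<k. of_int (w j l * \<chi> (zunit l) i)) / (of_int (c j) :: rat)"
      using ij by (simp add: A_def B_def scalar_prod_def atLeast0LessThan sum_divide_distrib mult.commute)
    also have "\<dots> = of_int (\<chi> (w j) i) / of_int (c j)"
      using zgrp_hom_expansion[OF \<chi>, of "w j" i] cw[OF ij(2)] by simp
    also have "\<dots> = 1\<^sub>m k $$ (i, j)" using ij cw[OF ij(2)] by (simp add: zunit_def)
    finally show "(A * B) $$ (i, j) = 1\<^sub>m k $$ (i, j)" .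
  qed (simp_all add: A_def B_def)
  then have BA: "B * A = 1\<^sub>m k" by (rule mat_mult_left_right_inverse[OF A B])
  define vz where "vz = vec k (\<lambda>i. of_int (z i) :: rat)"
  have "A *\<^sub>v vz = 0\<^sub>v k"
  proof (rule eq_vecI)
    fix i assume "i < dim_vec (0\<^sub>v k :: rat vec)"
    then have i: "i < k" by simp
    have "(A *\<^sub>v vz) $ i = of_int (\<Sum>j<k. z j * \<chi> (zunit j) i)"
      using i by (simp add: A_def vz_def scalar_prod_def atLeast0LessThan mult.commute)
    also have "\<dots> = 0" using zgrp_hom_expansion[OF \<chi> z, of i] \<chi>z by simp
    finally show "(A *\<^sub>v vz) $ i = 0\<^sub>v k $ i" using i by simp
  qed (simp add: A_def)
  have vz: "vz \<in> carrier_vec k" by (simp add: vz_def)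
  have "vz = (B * A) *\<^sub>v vz" using BA vz by simp
  also have "\<dots> = B *\<^sub>v (A *\<^sub>v vz)" using A B vz by simp
  also have "\<dots> = 0\<^sub>v k" using B \<open>A *\<^sub>v vz = 0\<^sub>v k\<close> by auto
  finally have "vz $ i = 0" if "i < k" for i using that by simp
  then have "z i = 0" for i using z by (cases "i < k") (simp_all add: vz_def zvec_def)
  then show ?thesis by (simp add: fun_eq_iff)
qed

lemma twisted_conj_zgrp_iff:
  assumes "\<psi> \<in> hom (zgrp k) (zgrp k)"
  shows "(x, y) \<in> twisted_conj (zgrp k) \<psi> \<longleftrightarrow>
    x \<in> zvec k \<and> y \<in> zvec k \<and> (\<exists>g \<in> zvec k. y = x + (g - \<psi> g))"
proof -
  interpret group_hom "zgrp k" "zgrp k" \<psi>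
    using assms zgrp_group by (simp add: group_hom_def group_hom_axioms_def)
  have "\<psi> (- g) = - \<psi> g" if "g \<in> zvec k" for g
    using hom_inv[of g] hom_closed[of g] that by simp
  then show ?thesis by (auto simp: twisted_conj_def algebra_simps)
qed

lemma reidemeister_zgrp_hits_multiples:
  assumes \<psi>: "\<psi> \<in> hom (zgrp k) (zgrp k)"
    and fin: "finite (reidemeister_classes (zgrp k) \<psi>)" and i: "i < k"
  shows "\<exists>c w. c \<noteq> 0 \<and> w \<in> zvec k \<and> w - \<psi> w = (\<lambda>j. c * zunit i j)"
proof -
  let ?r = "twisted_conj (zgrp k) \<psi>"
  define cls where "cls n = ?r `` {\<lambda>j. int n * zunit i j}" for n
  have "range cls \<subseteq> reidemeister_classes (zgrp k) \<psi>"
    using i by (auto simp: cls_def reidemeister_classes_def quotientI)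
  then have "\<not> inj cls"
    using fin infinite_UNIV_nat by (meson finite_imageD finite_subset)
  then obtain a b where ab: "a \<noteq> b" "cls a = cls b" by (auto simp: inj_def)
  have "(\<lambda>j. int b * zunit i j) \<in> cls b"
    using equiv_class_self[OF group.twisted_conj_equiv[OF zgrp_group \<psi>]] i by (simp add: cls_def)
  then have "(\<lambda>j. int b * zunit i j) \<in> cls a" using ab(2) by simp
  then have "(\<lambda>j. int a * zunit i j, \<lambda>j. int b * zunit i j) \<in> ?r" by (simp add: cls_def)
  then obtain g where g: "g \<in> zvec k"
    and "(\<lambda>j. int b * zunit i j) = (\<lambda>j. int a * zunit i j) + (g - \<psi> g)"
    unfolding twisted_conj_zgrp_iff[OF \<psi>] by blast
  then have "g - \<psi> g = (\<lambda>j. (int b - int a) * zunit i j)"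
    by (auto simp: fun_eq_iff algebra_simps)
  then show ?thesis using ab(1) g by (intro exI[of _ "int b - int a"] exI[of _ g]) simp
qed

lemma reidemeister_zgrp_fixed_point_free:
  assumes \<psi>: "\<psi> \<in> hom (zgrp k) (zgrp k)"
    and fin: "finite (reidemeister_classes (zgrp k) \<psi>)"
    and z: "z \<in> zvec k" and fixed: "\<psi> z = z"
  shows "z = 0"
proof -
  have "\<psi> v \<in> zvec k" if "v \<in> zvec k" for v
    using hom_in_carrier[of \<psi> "zgrp k" "zgrp k" v] \<psi> that by simp
  then have "(\<lambda>v. v - \<psi> v) \<in> hom (zgrp k) (zgrp k)"
    using \<psi> by (intro homI) (auto simp: hom_def)
  then show ?thesis
    using zgrp_hom_inj_if_hits_multiples[OF _ reidemeister_zgrp_hits_multiples[OF \<psi> fin] z] fixed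
    by simp
qed

lemma carrier_wreath: "carrier (wreath G k) = fsupp G k \<times> zvec k"
  by (simp add: wreath_def)

lemma wreath_mult: "(s, m) \<otimes>\<^bsub>wreath G k\<^esub> (t, n) = (\<lambda>x. s x \<otimes>\<^bsub>G\<^esub> t (x - m), m + n)"
  by (simp add: wreath_def)

lemma wreath_one: "\<one>\<^bsub>wreath G k\<^esub> = (\<lambda>_. \<one>\<^bsub>G\<^esub>, 0)"
  by (simp add: wreath_def)

lemma snd_wreath_mult [simp]: "snd (a \<otimes>\<^bsub>wreath G k\<^esub> b) = snd a + snd b"
  by (cases a; cases b) (simp add: wreath_mult)

lemma snd_zelt [simp]: "snd (zelt G m) = m"
  by (simp add: zelt_def)

lemma tau_eq: "tau G k m h = zelt G m \<otimes>\<^bsub>wreath G k\<^esub> h \<otimes>\<^bsub>wreath G k\<^esub> inv\<^bsub>wreath G k\<^esub> zelt G m"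
  by (simp add: tau_def)

locale wreath_prod = group G for G :: "('a, 'b) monoid_scheme" (structure) + fixes k :: nat
begin

abbreviation W where "W \<equiv> wreath G k"
abbreviation S where "S \<equiv> sigma_grp G k"

lemma fsupp_mult:
  assumes s: "s \<in> fsupp G k" and t: "t \<in> fsupp G k" and m: "m \<in> zvec k"
  shows "(\<lambda>x. s x \<otimes> t (x - m)) \<in> fsupp G k"
proof -
  have "{x. s x \<otimes> t (x - m) \<noteq> \<one>} \<subseteq> {x. s x \<noteq> \<one>} \<union> (\<lambda>y. y + m) ` {y. t y \<noteq> \<one>}"
  proof
    fix x assume "x \<in> {x. s x \<otimes> t (x - m) \<noteq> \<one>}"
    then have "s x \<noteq> \<one> \<or> t (x - m) \<noteq> \<one>" by auto
    moreover have "x = (x - m) + m" by simp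
    ultimately show "x \<in> {x. s x \<noteq> \<one>} \<union> (\<lambda>y. y + m) ` {y. t y \<noteq> \<one>}" by blast
  qed
  moreover have "finite ({x. s x \<noteq> \<one>} \<union> (\<lambda>y. y + m) ` {y. t y \<noteq> \<one>})"
    using s t by (simp add: fsupp_def)
  ultimately have "finite {x. s x \<otimes> t (x - m) \<noteq> \<one>}" by (rule finite_subset)
  moreover have "x - m \<notin> zvec k" if "x \<notin> zvec k" for x
    using m that by (simp add: zvec_def)
  ultimately show ?thesis using s t by (simp add: fsupp_def)
qed

lemma fsupp_inv:
  assumes s: "s \<in> fsupp G k" and m: "m \<in> zvec k"
  shows "(\<lambda>x. inv s (x + m)) \<in> fsupp G k"
proof -
  have "{x. inv s (x + m) \<noteq> \<one>} \<subseteq> (\<lambda>y. y - m) ` {y. s y \<noteq> \<one>}"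
  proof
    fix x assume "x \<in> {x. inv s (x + m) \<noteq> \<one>}"
    then have "s (x + m) \<noteq> \<one>" by auto
    moreover have "x = (x + m) - m" by simp
    ultimately show "x \<in> (\<lambda>y. y - m) ` {y. s y \<noteq> \<one>}" by blast
  qed
  moreover have "finite {y. s y \<noteq> \<one>}" using s by (simp add: fsupp_def)
  ultimately have "finite {x. inv s (x + m) \<noteq> \<one>}" by (meson finite_imageI finite_subset)
  moreover have "x + m \<notin> zvec k" if "x \<notin> zvec k" for x
    using m that by (simp add: zvec_def)
  ultimately show ?thesis using s by (simp add: fsupp_def)
qed

lemma one_fsupp: "(\<lambda>_. \<one>) \<in> fsupp G k"
  by (simp add: fsupp_def)

lemma wreath_group: "group W"
proof (rule groupI)
  fix x y assume "x \<in> carrier W" "y \<in> carrier W"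
  then show "x \<otimes>\<^bsub>W\<^esub> y \<in> carrier W"
    by (cases x; cases y) (simp add: carrier_wreath wreath_mult fsupp_mult)
next
  show "\<one>\<^bsub>W\<^esub> \<in> carrier W" by (simp add: carrier_wreath wreath_one one_fsupp)
next
  fix x y z assume "x \<in> carrier W" "y \<in> carrier W" "z \<in> carrier W"
  moreover obtain s m t n u p where "x = (s, m)" "y = (t, n)" "z = (u, p)"
    by (cases x; cases y; cases z) auto
  ultimately show "x \<otimes>\<^bsub>W\<^esub> y \<otimes>\<^bsub>W\<^esub> z = x \<otimes>\<^bsub>W\<^esub> (y \<otimes>\<^bsub>W\<^esub> z)"
    by (simp add: carrier_wreath wreath_mult fsupp_def fun_eq_iff m_assoc diff_diff_eq add.assoc)
next
  fix x assume "x \<in> carrier W"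
  then show "\<one>\<^bsub>W\<^esub> \<otimes>\<^bsub>W\<^esub> x = x"
    by (cases x) (simp add: carrier_wreath wreath_mult wreath_one fsupp_def)
next
  fix x assume x: "x \<in> carrier W"
  obtain s m where x_eq: "x = (s, m)" by (cases x)
  have s: "s \<in> fsupp G k" and m: "m \<in> zvec k" using x x_eq by (auto simp: carrier_wreath)
  have "(\<lambda>x. inv s (x + m), - m) \<in> carrier W" using fsupp_inv[OF s m] m by (simp add: carrier_wreath)
  moreover have "(\<lambda>x. inv s (x + m), - m) \<otimes>\<^bsub>W\<^esub> x = \<one>\<^bsub>W\<^esub>"
    using s by (simp add: x_eq wreath_mult wreath_one fsupp_def)
  ultimately show "\<exists>y \<in> carrier W. y \<otimes>\<^bsub>W\<^esub> x = \<one>\<^bsub>W\<^esub>" by blast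
qed

sublocale W: group W by (rule wreath_group)

lemma wreath_inv:
  assumes "(s, m) \<in> carrier W"
  shows "inv\<^bsub>W\<^esub> (s, m) = (\<lambda>x. inv s (x + m), - m)"
proof (rule W.inv_equality)
  have s: "s \<in> fsupp G k" and m: "m \<in> zvec k" using assms by (auto simp: carrier_wreath)
  show "(\<lambda>x. inv s (x + m), - m) \<otimes>\<^bsub>W\<^esub> (s, m) = \<one>\<^bsub>W\<^esub>"
    using s by (simp add: wreath_mult wreath_one fsupp_def)
  show "(\<lambda>x. inv s (x + m), - m) \<in> carrier W"
    using fsupp_inv[OF s m] m by (simp add: carrier_wreath)
qed (rule assms)

lemma snd_wreath_inv [simp]: "x \<in> carrier W \<Longrightarrow> snd (inv\<^bsub>W\<^esub> x) = - snd x"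
  by (cases x) (simp add: wreath_inv)

lemma snd_in_zvec [simp]: "x \<in> carrier W \<Longrightarrow> snd x \<in> zvec k"
  by (auto simp: carrier_wreath)

lemma zelt_carrier [simp]: "m \<in> zvec k \<Longrightarrow> zelt G m \<in> carrier W"
  by (simp add: zelt_def carrier_wreath one_fsupp)

lemma zelt_mult: "zelt G m \<otimes>\<^bsub>W\<^esub> zelt G n = zelt G (m + n)"
  by (simp add: zelt_def wreath_mult)

lemma wreath_decomp:
  assumes "x \<in> carrier W"
  shows "x = (fst x, 0) \<otimes>\<^bsub>W\<^esub> zelt G (snd x)"
  using assms by (cases x) (simp add: carrier_wreath zelt_def wreath_mult fsupp_def)

lemma sigma_subgroup: "subgroup {h \<in> carrier W. snd h = 0} W"
proof (rule W.subgroupI)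
  show "{h \<in> carrier W. snd h = 0} \<noteq> {}" using W.one_closed by (auto simp: wreath_one)
qed auto

lemma sigma_group: "group S"
  unfolding sigma_grp_def by (rule W.subgroup_imp_group[OF sigma_subgroup])

lemma carrier_sigma: "h \<in> carrier S \<longleftrightarrow> h \<in> carrier W \<and> snd h = 0"
  by (simp add: sigma_grp_def)

lemma twisted_conj_sigma_iff:
  "(x, y) \<in> twisted_conj S \<psi> \<longleftrightarrow> x \<in> carrier S \<and> y \<in> carrier S \<and>
    (\<exists>g \<in> carrier S. y = g \<otimes>\<^bsub>W\<^esub> x \<otimes>\<^bsub>W\<^esub> \<psi> (inv\<^bsub>W\<^esub> g))"
proof -
  have "inv\<^bsub>S\<^esub> g = inv\<^bsub>W\<^esub> g" if "g \<in> carrier S" for g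
    using W.m_inv_consistent[OF sigma_subgroup] that by (simp add: sigma_grp_def)
  then show ?thesis by (auto simp: twisted_conj_def sigma_grp_def)
qed

end

locale wreath_aut = wreath_prod +
  fixes \<phi>
  assumes finite_carrier: "finite (carrier G)" and iso: "\<phi> \<in> iso W W"
begin

abbreviation phibar where "phibar \<equiv> induced_bar G \<phi>"

sublocale phi: group_hom W W \<phi>
  using iso W.is_group by (simp add: group_hom_def group_hom_axioms_def iso_def)

lemma wreath_nat_pow_sigma: "s \<in> fsupp G k \<Longrightarrow> (s, 0) [^]\<^bsub>W\<^esub> (n::nat) = (\<lambda>y. s y [^] n, 0)"
  by (induction n) (simp_all add: wreath_one wreath_mult fun_diff_def)

lemma snd_wreath_nat_pow: "snd (x [^]\<^bsub>W\<^esub> (n::nat)) = (\<lambda>i. int n * snd x i)"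
  by (induction n) (simp_all add: wreath_one fun_eq_iff algebra_simps)

text \<open>\<phi> preserves \<Sigma> because \<Sigma> has exponent dividing |G| while Z^k is torsion-free.\<close>
lemma snd_phi_sigma:
  assumes x: "x \<in> carrier W" and "snd x = 0"
  shows "snd (\<phi> x) = 0"
proof -
  obtain s where x_eq: "x = (s, 0)" and s: "s \<in> fsupp G k"
    using assms by (cases x) (auto simp: carrier_wreath)
  have n: "Coset.order G > 0" using finite_carrier by (simp add: order_gt_0_iff_finite)
  have "x [^]\<^bsub>W\<^esub> Coset.order G = \<one>\<^bsub>W\<^esub>"
    using s by (simp add: x_eq wreath_nat_pow_sigma wreath_one fsupp_def pow_order_eq_1 finite_carrier)
  then have "\<phi> x [^]\<^bsub>W\<^esub> Coset.order G = \<one>\<^bsub>W\<^esub>"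
    by (metis phi.hom_nat_pow[OF x] phi.hom_one)
  then have "(\<lambda>i. int (Coset.order G) * snd (\<phi> x) i) = 0"
    using snd_wreath_nat_pow[of "\<phi> x" "Coset.order G"] by (simp add: wreath_one)
  then show ?thesis using n by (simp add: fun_eq_iff)
qed

lemma phibar_zvec [simp]: "m \<in> zvec k \<Longrightarrow> phibar m \<in> zvec k"
  by (simp add: induced_bar_def)

lemma snd_phi:
  assumes x: "x \<in> carrier W"
  shows "snd (\<phi> x) = phibar (snd x)"
proof -
  have "(fst x, 0) \<in> carrier W" using x by (auto simp: carrier_wreath)
  moreover have "\<phi> x = \<phi> (fst x, 0) \<otimes>\<^bsub>W\<^esub> \<phi> (zelt G (snd x))"
    using wreath_decomp[OF x] x calculation by (metis phi.hom_mult snd_in_zvec zelt_carrier)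
  ultimately show ?thesis using snd_phi_sigma by (simp add: induced_bar_def)
qed

lemma phibar_hom: "phibar \<in> hom (zgrp k) (zgrp k)"
proof (rule homI)
  fix m n assume "m \<in> carrier (zgrp k)" "n \<in> carrier (zgrp k)"
  then show "phibar (m \<otimes>\<^bsub>zgrp k\<^esub> n) = phibar m \<otimes>\<^bsub>zgrp k\<^esub> phibar n"
    using phi.hom_mult[of "zelt G m" "zelt G n"] by (simp add: induced_bar_def zelt_mult)
qed simp

lemma phibar_uminus: "m \<in> zvec k \<Longrightarrow> phibar (- m) = - phibar m"
  using group_hom.hom_inv[of "zgrp k" "zgrp k" phibar m] phibar_hom zgrp_group
  by (simp add: group_hom_def group_hom_axioms_def)

lemma snd_twisted_conj_wreath:
  assumes "g \<in> carrier W" and "x \<in> carrier W"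
  shows "snd (g \<otimes>\<^bsub>W\<^esub> x \<otimes>\<^bsub>W\<^esub> \<phi> (inv\<^bsub>W\<^esub> g)) = snd x + (snd g - phibar (snd g))"
  using assms by (simp add: snd_phi phibar_uminus)

lemma tau_phi_hom:
  assumes m: "m \<in> zvec k"
  shows "(\<lambda>h. tau G k m (\<phi> h)) \<in> hom S S"
proof (rule homI)
  fix h assume "h \<in> carrier S"
  then show "tau G k m (\<phi> h) \<in> carrier S"
    using m snd_phi_sigma[of h] by (simp add: carrier_sigma tau_eq)
next
  fix x y assume "x \<in> carrier S" "y \<in> carrier S"
  moreover have "inv\<^bsub>W\<^esub> zelt G m \<otimes>\<^bsub>W\<^esub> (zelt G m \<otimes>\<^bsub>W\<^esub> a) = a" if "a \<in> carrier W" for a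
    using m that by (simp add: W.m_assoc[symmetric])
  ultimately show "tau G k m (\<phi> (x \<otimes>\<^bsub>S\<^esub> y)) = tau G k m (\<phi> x) \<otimes>\<^bsub>S\<^esub> tau G k m (\<phi> y)"
    using m by (simp add: carrier_sigma sigma_grp_def tau_eq W.m_assoc)
qed

lemma twisted_conj_sigma_tau_iff:
  assumes m: "m \<in> zvec k" and f: "f \<in> carrier S" and h: "h \<in> carrier S"
  shows "(f, h) \<in> twisted_conj S (\<lambda>h. tau G k m (\<phi> h)) \<longleftrightarrow>
    (\<exists>g \<in> carrier S. h \<otimes>\<^bsub>W\<^esub> zelt G m = g \<otimes>\<^bsub>W\<^esub> (f \<otimes>\<^bsub>W\<^esub> zelt G m) \<otimes>\<^bsub>W\<^esub> \<phi> (inv\<^bsub>W\<^esub> g))"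
proof -
  have "h = g \<otimes>\<^bsub>W\<^esub> f \<otimes>\<^bsub>W\<^esub> tau G k m (\<phi> (inv\<^bsub>W\<^esub> g)) \<longleftrightarrow>
      h \<otimes>\<^bsub>W\<^esub> zelt G m = g \<otimes>\<^bsub>W\<^esub> (f \<otimes>\<^bsub>W\<^esub> zelt G m) \<otimes>\<^bsub>W\<^esub> \<phi> (inv\<^bsub>W\<^esub> g)"
    if g: "g \<in> carrier W" for g
  proof -
    have "(g \<otimes>\<^bsub>W\<^esub> f \<otimes>\<^bsub>W\<^esub> tau G k m (\<phi> (inv\<^bsub>W\<^esub> g))) \<otimes>\<^bsub>W\<^esub> zelt G m =
        g \<otimes>\<^bsub>W\<^esub> (f \<otimes>\<^bsub>W\<^esub> zelt G m) \<otimes>\<^bsub>W\<^esub> \<phi> (inv\<^bsub>W\<^esub> g)"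
      using g f m by (simp add: carrier_sigma tau_eq W.m_assoc)
    then show ?thesis
      using W.right_cancel[of "zelt G m" h "g \<otimes>\<^bsub>W\<^esub> f \<otimes>\<^bsub>W\<^esub> tau G k m (\<phi> (inv\<^bsub>W\<^esub> g))"] g f h m
      by (simp add: carrier_sigma tau_eq)
  qed
  then show ?thesis using f h by (auto simp: twisted_conj_sigma_iff carrier_sigma)
qed

lemma twisted_cover_induced_bar:
  assumes "twisted_cover W \<phi> F"
  shows "twisted_cover (zgrp k) phibar (snd ` F)"
proof -
  have F: "F \<subseteq> carrier W" "finite F" "carrier W \<subseteq> twisted_conj W \<phi> `` F"
    using assms by (auto simp: twisted_cover_def)
  have "zvec k \<subseteq> twisted_conj (zgrp k) phibar `` (snd ` F)"
  proof
    fix n assume n: "n \<in> zvec k"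
    then obtain f where f: "f \<in> F" "(f, zelt G n) \<in> twisted_conj W \<phi>"
      using F(3) zelt_carrier by blast
    then obtain g where g: "g \<in> carrier W" and eq: "zelt G n = g \<otimes>\<^bsub>W\<^esub> f \<otimes>\<^bsub>W\<^esub> \<phi> (inv\<^bsub>W\<^esub> g)"
      by (auto simp: twisted_conj_def)
    have "n = snd (g \<otimes>\<^bsub>W\<^esub> f \<otimes>\<^bsub>W\<^esub> \<phi> (inv\<^bsub>W\<^esub> g))" by (metis eq snd_zelt)
    also have "\<dots> = snd f + (snd g - phibar (snd g))"
      using snd_twisted_conj_wreath[OF g] f F(1) by blast
    finally have "n = snd f + (snd g - phibar (snd g))" .
    then have "(snd f, n) \<in> twisted_conj (zgrp k) phibar"
      using twisted_conj_zgrp_iff[OF phibar_hom] f F(1) g n by auto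
    then show "n \<in> twisted_conj (zgrp k) phibar `` (snd ` F)" using f by blast
  qed
  moreover have "snd ` F \<subseteq> zvec k" using F(1) by (auto simp: carrier_wreath)
  ultimately show ?thesis using F(2) by (simp add: twisted_cover_def)
qed

text \<open>Two elements of \<Sigma>\<cdot>m that are \<phi>-conjugate in the wreath product are already conjugated by an
  element of \<Sigma>: the conjugator's image in Z^k is fixed by phibar, hence zero.\<close>
lemma twisted_cover_sigma:
  assumes cover: "twisted_cover W \<phi> F"
    and fixed_point_free: "\<And>z. z \<in> zvec k \<Longrightarrow> phibar z = z \<Longrightarrow> z = 0"
    and m: "m \<in> zvec k"
  shows "\<exists>F'. twisted_cover S (\<lambda>h. tau G k m (\<phi> h)) F'"
proof -
  let ?zm = "zelt G m"
  let ?r = "twisted_conj W \<phi>"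
  have F: "finite F" "carrier W \<subseteq> ?r `` F" using cover by (auto simp: twisted_cover_def)
  have r: "equiv (carrier W) ?r" by (rule W.twisted_conj_equiv[OF phi.homh])
  define lifts where "lifts f = {h \<in> carrier S. (f, h \<otimes>\<^bsub>W\<^esub> ?zm) \<in> ?r}" for f
  define F' where "F' = (\<lambda>f. SOME h. h \<in> lifts f) ` {f \<in> F. lifts f \<noteq> {}}"
  have lift: "(SOME h. h \<in> lifts f) \<in> lifts f" if "lifts f \<noteq> {}" for f
    using that by (simp add: some_in_eq)
  have "F' \<subseteq> carrier S"
  proof
    fix h assume "h \<in> F'"
    then obtain f where "lifts f \<noteq> {}" "h = (SOME h. h \<in> lifts f)" by (auto simp: F'_def)
    then have "h \<in> lifts f" using lift by simp
    then show "h \<in> carrier S" by (simp add: lifts_def)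
  qed
  moreover have "finite F'" using F by (simp add: F'_def)
  moreover have "carrier S \<subseteq> twisted_conj S (\<lambda>h. tau G k m (\<phi> h)) `` F'"
  proof
    fix h assume h: "h \<in> carrier S"
    then have "h \<otimes>\<^bsub>W\<^esub> ?zm \<in> carrier W" using m by (simp add: carrier_sigma)
    then obtain f where f: "f \<in> F" "(f, h \<otimes>\<^bsub>W\<^esub> ?zm) \<in> ?r" using F by blast
    then have ne: "lifts f \<noteq> {}" using h unfolding lifts_def by blast
    define h' where "h' = (SOME h. h \<in> lifts f)"
    have h': "h' \<in> carrier S" "(f, h' \<otimes>\<^bsub>W\<^esub> ?zm) \<in> ?r"
      using lift[OF ne] by (simp_all add: lifts_def h'_def)
    have "(h' \<otimes>\<^bsub>W\<^esub> ?zm, h \<otimes>\<^bsub>W\<^esub> ?zm) \<in> ?r" using f(2) h'(2) r by (meson equivE symD transD)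
    then obtain g where g: "g \<in> carrier W"
      and eq: "h \<otimes>\<^bsub>W\<^esub> ?zm = g \<otimes>\<^bsub>W\<^esub> (h' \<otimes>\<^bsub>W\<^esub> ?zm) \<otimes>\<^bsub>W\<^esub> \<phi> (inv\<^bsub>W\<^esub> g)"
      by (auto simp: twisted_conj_def)
    have "snd (h \<otimes>\<^bsub>W\<^esub> ?zm) = snd (h' \<otimes>\<^bsub>W\<^esub> ?zm) + (snd g - phibar (snd g))"
      unfolding eq using g h' m by (intro snd_twisted_conj_wreath) (simp_all add: carrier_sigma)
    then have "phibar (snd g) = snd g" using h h' by (simp add: carrier_sigma)
    then have "g \<in> carrier S" using fixed_point_free g by (simp add: carrier_sigma)
    then have "(h', h) \<in> twisted_conj S (\<lambda>h. tau G k m (\<phi> h))"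
      using twisted_conj_sigma_tau_iff[OF m h'(1) h] eq by blast
    moreover have "h' \<in> F'" using f(1) ne by (auto simp: F'_def h'_def)
    ultimately show "h \<in> twisted_conj S (\<lambda>h. tau G k m (\<phi> h)) `` F'" by blast
  qed
  ultimately show ?thesis unfolding twisted_cover_def by blast
qed

text \<open>Every x is \<phi>-conjugate, by an element of Z^k, to an element over some m \<in> M; the cover of
  \<Sigma> for tau_m \<circ> \<phi>, translated by m, then reaches it.\<close>
lemma twisted_cover_wreath:
  assumes M: "finite M" "M \<subseteq> zvec k" "zvec k \<subseteq> twisted_conj (zgrp k) phibar `` M"
    and covers: "\<And>m. m \<in> M \<Longrightarrow> \<exists>F. twisted_cover S (\<lambda>h. tau G k m (\<phi> h)) F"
  shows "\<exists>F. twisted_cover W \<phi> F"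
proof -
  let ?r = "twisted_conj W \<phi>"
  have r: "equiv (carrier W) ?r" by (rule W.twisted_conj_equiv[OF phi.homh])
  obtain Fs where Fs: "\<And>m. m \<in> M \<Longrightarrow> twisted_cover S (\<lambda>h. tau G k m (\<phi> h)) (Fs m)"
    using covers by metis
  define F where "F = (\<Union>m \<in> M. (\<lambda>f. f \<otimes>\<^bsub>W\<^esub> zelt G m) ` Fs m)"
  have "finite F" using M Fs by (simp add: F_def twisted_cover_def)
  moreover have "F \<subseteq> carrier W"
    using Fs M by (force simp: F_def twisted_cover_def carrier_sigma)
  moreover have "carrier W \<subseteq> ?r `` F"
  proof
    fix x assume x: "x \<in> carrier W"
    obtain m z where mM: "m \<in> M" and z: "z \<in> zvec k" and snd_x: "snd x = m + (z - phibar z)"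
      using M(3) snd_in_zvec[OF x] twisted_conj_zgrp_iff[OF phibar_hom] by blast
    let ?g = "zelt G (- z)"
    let ?zm = "zelt G m"
    have m: "m \<in> zvec k" using mM M(2) by auto
    define y where "y = ?g \<otimes>\<^bsub>W\<^esub> x \<otimes>\<^bsub>W\<^esub> \<phi> (inv\<^bsub>W\<^esub> ?g)"
    have y: "y \<in> carrier W" and xy: "(x, y) \<in> ?r"
      using x z by (auto simp: y_def twisted_conj_def)
    have "snd y = m"
      using snd_twisted_conj_wreath[of ?g x] x z snd_x by (simp add: y_def phibar_uminus)
    then have h: "y \<otimes>\<^bsub>W\<^esub> inv\<^bsub>W\<^esub> ?zm \<in> carrier S" using y m by (simp add: carrier_sigma)
    then obtain f where f: "f \<in> Fs m" "(f, y \<otimes>\<^bsub>W\<^esub> inv\<^bsub>W\<^esub> ?zm) \<in> twisted_conj S (\<lambda>h. tau G k m (\<phi> h))"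
      using Fs[OF mM] by (auto simp: twisted_cover_def)
    then have fS: "f \<in> carrier S" using Fs[OF mM] by (auto simp: twisted_cover_def)
    have "(f \<otimes>\<^bsub>W\<^esub> ?zm, y) \<in> ?r"
      using f(2) twisted_conj_sigma_tau_iff[OF m fS h] y m fS
      by (auto simp: twisted_conj_def carrier_sigma W.m_assoc)
    then have "(f \<otimes>\<^bsub>W\<^esub> ?zm, x) \<in> ?r" using xy r by (meson equivE symD transD)
    moreover have "f \<otimes>\<^bsub>W\<^esub> ?zm \<in> F" using mM f(1) by (auto simp: F_def)
    ultimately show "x \<in> ?r `` F" by blast
  qed
  ultimately show ?thesis unfolding twisted_cover_def by blast
qed

lemma reidemeister_wreath_finite_iff:
  "reidemeister_number W \<phi> < \<infinity> \<longleftrightarrow>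
     reidemeister_number (zgrp k) phibar < \<infinity> \<and>
     (\<forall>m \<in> zvec k. reidemeister_number S (\<lambda>h. tau G k m (\<phi> h)) < \<infinity>)"
  (is "?R\<Gamma> \<longleftrightarrow> ?RZ \<and> ?R\<Sigma>")
proof
  assume ?R\<Gamma>
  then obtain F where F: "twisted_cover W \<phi> F"
    using reidemeister_number_finite_iff[OF W.is_group phi.homh] by blast
  then have ?RZ
    using twisted_cover_induced_bar reidemeister_number_finite_iff[OF zgrp_group phibar_hom] by blast
  then have "finite (reidemeister_classes (zgrp k) phibar)"
    by (simp add: reidemeister_number_def split: if_splits)
  then have "z = 0" if "z \<in> zvec k" "phibar z = z" for z
    using reidemeister_zgrp_fixed_point_free[OF phibar_hom] that by blast
  then have ?R\<Sigma>
    using twisted_cover_sigma[OF F] reidemeister_number_finite_iff[OF sigma_group tau_phi_hom] by blast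
  with \<open>?RZ\<close> show "?RZ \<and> ?R\<Sigma>" ..
next
  assume "?RZ \<and> ?R\<Sigma>"
  then obtain M where M: "twisted_cover (zgrp k) phibar M"
    using reidemeister_number_finite_iff[OF zgrp_group phibar_hom] by blast
  then have "\<exists>F. twisted_cover S (\<lambda>h. tau G k m (\<phi> h)) F" if "m \<in> M" for m
    using \<open>?RZ \<and> ?R\<Sigma>\<close> reidemeister_number_finite_iff[OF sigma_group tau_phi_hom] that
    by (auto simp: twisted_cover_def)
  then have "\<exists>F. twisted_cover W \<phi> F"
    using M by (intro twisted_cover_wreath) (auto simp: twisted_cover_def)
  then show ?R\<Gamma> using reidemeister_number_finite_iff[OF W.is_group phi.homh] by blast
qed

lemma reidemeister_wreath_finite_if_representatives:
  assumes "M \<subseteq> zvec k"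
    and "\<forall>C \<in> reidemeister_classes (zgrp k) phibar. \<exists>!m. m \<in> M \<and> m \<in> C"
    and "reidemeister_number (zgrp k) phibar < \<infinity>"
    and "\<forall>m \<in> M. reidemeister_number S (\<lambda>h. tau G k m (\<phi> h)) < \<infinity>"
  shows "reidemeister_number W \<phi> < \<infinity>"
proof -
  have "finite (zvec k // twisted_conj (zgrp k) phibar)"
    using assms(3) by (simp add: reidemeister_number_def reidemeister_classes_def split: if_splits)
  then have "finite M" "zvec k \<subseteq> twisted_conj (zgrp k) phibar `` M"
    using representatives_finite_cover[OF group.twisted_conj_equiv[OF zgrp_group phibar_hom]]
      assms(1,2) by (simp_all add: reidemeister_classes_def)
  then show ?thesis
    using twisted_cover_wreath assms(1,4) reidemeister_number_finite_iff[OF sigma_group tau_phi_hom]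
      reidemeister_number_finite_iff[OF W.is_group phi.homh] by blast
qed

end

theorem mainTheorem2:
  fixes G :: "('a, 'b) monoid_scheme" and k :: nat
    and \<phi> :: "((nat \<Rightarrow> int) \<Rightarrow> 'a) \<times> (nat \<Rightarrow> int) \<Rightarrow> ((nat \<Rightarrow> int) \<Rightarrow> 'a) \<times> (nat \<Rightarrow> int)"
  assumes "comm_group G" and "finite (carrier G)" and "k \<ge> 1"
    and "\<phi> \<in> iso (wreath G k) (wreath G k)"
  shows "(reidemeister_number (wreath G k) \<phi> < \<infinity> \<longleftrightarrow>
            reidemeister_number (zgrp k) (induced_bar G \<phi>) < \<infinity> \<and>
            (\<forall>m \<in> zvec k. reidemeister_number (sigma_grp G k) (\<lambda>h. tau G k m (\<phi> h)) < \<infinity>))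
       \<and> (\<forall>M. M \<subseteq> zvec k \<longrightarrow>
            (\<forall>C \<in> reidemeister_classes (zgrp k) (induced_bar G \<phi>). \<exists>!m. m \<in> M \<and> m \<in> C) \<longrightarrow>
            reidemeister_number (zgrp k) (induced_bar G \<phi>) < \<infinity> \<longrightarrow>
            (\<forall>m \<in> M. reidemeister_number (sigma_grp G k) (\<lambda>h. tau G k m (\<phi> h)) < \<infinity>) \<longrightarrow>
            reidemeister_number (wreath G k) \<phi> < \<infinity>)"
proof -
  interpret wreath_aut G k \<phi>
    using assms by (simp add: wreath_aut_def wreath_aut_axioms_def wreath_prod_def comm_group.axioms(2))
  show ?thesis
    using reidemeister_wreath_finite_iff reidemeister_wreath_finite_if_representatives by blast
qed

end
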